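(* Every bi-nested sequent that is provable in the calculus $\mathbf{C}_{\mathbf{IK}}$ is valid, i.e. if $S$ is provable in $\mathbf{C}_{\mathbf{IK}}$ then for every bi-relational model $\mathcal{M}=(W,\le,R,V)$ and every $w\in W$ we have $\mathcal{M},w\Vdash S$.
   Context: Formulas are generated by $A::=p\mid\bot\mid\top\mid A\wedge A\mid A\vee A\mid A\supset A\mid\Box A\mid\Diamond A$, with $p$ ranging over a countable set $\mathsf{At}$ of atoms. A bi-relational model is $\mathcal{M}=(W,\le,R,V)$ with $W\neq\emptyset$, $\le$ a reflexive transitive relation on $W$, $R$ a binary relation on $W$, and $V:W\to\wp(\mathsf{At})$ such that $x\le y$ implies $V(x)\subseteq V(y)$; moreover (FC) if $x\le x'$ and $xRz$ then there is $z'$ with $x'Rz'$ and $z\le z'$; (BC) if $xRz$ and $z\le z'$ then there is $x'$ with $x\le x'$ and $x'Rz'$. Forcing: $w\not\Vdash\bot$, $w\Vdash\top$, $w\Vdash p$ iff $p\in V(w)$; $\wedge,\vee$ pointwise; $w\Vdash B\supset C$ iff for all $w'\ge w$, $w'\Vdash B$ implies $w'\Vdash C$; $w\Vdash\Box B$ iff for all $w',v'$ with $w\le w'$ and $w'Rv'$, $v'\Vdash B$; $w\Vdash\Diamond B$ iff there is $v$ with $wRv$ and $v\Vdash B$. Bi-nested sequents: the empty sequent $\Rightarrow$ is one; if $\Gamma,\Delta'$ are finite multisets of formulas and $S_1,\dots,S_m,T_1,\dots,T_n$ ($m,n\ge0$) are bi-nested sequents then $\Gamma\Rightarrow\Delta',\langle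 S_1\rangle,\dots,\langle S_m\rangle,[T_1],\dots,[T_n]$ is one. $\langle S\rangle$ is an implication block, $[T]$ a modal block; $\Gamma$ is the antecedent, the rest the consequent. Forcing is extended: $x\not\Vdash(\Rightarrow)$; $x\Vdash[T]$ iff $y\Vdash T$ for all $y$ with $xRy$; $x\Vdash\langle T\rangle$ iff $x'\Vdash T$ for all $x'\ge x$; $x\Vdash\Gamma\Rightarrow\Delta$ iff $x\not\Vdash A$ for some $A\in\Gamma$ or $x\Vdash\mathcal{O}$ for some formula or block $\mathcal{O}\in\Delta$. A sequent is valid if it is forced at every world of every bi-relational model. A context $G\{\ \}$ is either the hole $\{\ \}$, or $\Gamma\Rightarrow\Delta,\langle G'\{\ \}\rangle$, or $\Gamma\Rightarrow\Delta,[G'\{\ \}]$ for a sequent $\Gamma\Rightarrow\Delta$ and context $G'\{\ \}$; $G\{S\}$ is the result of filling the hole with $S$. For the consequent $\Delta$ of a sequent, its local positive part $\Delta^*$ is: $\emptyset$ if $\Delta$ contains no modal block; and if $\Delta=\Delta_0,[\Lambda_1\Rightarrow\Theta_1],\dots,[\Lambda_k\Rightarrow\Theta_k]$ with $\Delta_0$ free of modal blocks, then $\Delta^*=[\Lambda_1\Rightarrow\Theta_1^*],\dots,[\Lambda_k\Rightarrow\Theta_k^*]$. The calculus $\mathbf{C}_{\mathbf{IK}}$ (premisses / conclusion; $\Gamma,\Gamma',\Delta,\Sigma,\Pi,\Lambda,\Theta$ multisets): axioms $G\{\Gamma,\bot\Rightarrow\Delta\}$, $G\{\Gamma\Rightarrow\top,\Delta\}$,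 $G\{\Gamma,p\Rightarrow\Delta,p\}$ ($p$ atomic); $(\wedge_L)$ $G\{A,B,\Gamma\Rightarrow\Delta\}$ / $G\{A\wedge B,\Gamma\Rightarrow\Delta\}$; $(\wedge_R)$ $G\{\Gamma\Rightarrow\Delta,A\}$, $G\{\Gamma\Rightarrow\Delta,B\}$ / $G\{\Gamma\Rightarrow\Delta,A\wedge B\}$; $(\vee_L)$ $G\{\Gamma,A\Rightarrow\Delta\}$, $G\{\Gamma,B\Rightarrow\Delta\}$ / $G\{\Gamma,A\vee B\Rightarrow\Delta\}$; $(\vee_R)$ $G\{\Gamma\Rightarrow\Delta,A,B\}$ / $G\{\Gamma\Rightarrow\Delta,A\vee B\}$; $(\supset_L)$ $G\{\Gamma,A\supset B\Rightarrow A,\Delta\}$, $G\{\Gamma,B\Rightarrow\Delta\}$ / $G\{\Gamma,A\supset B\Rightarrow\Delta\}$; $(\supset_R)$ $G\{\Gamma\Rightarrow\Delta,\langle A\Rightarrow B\rangle\}$ / $G\{\Gamma\Rightarrow\Delta,A\supset B\}$; $(\Box_L)$ $G\{\Gamma,\Box A\Rightarrow\Delta,[\Sigma,A\Rightarrow\Pi]\}$ / $G\{\Gamma,\Box A\Rightarrow\Delta,[\Sigma\Rightarrow\Pi]\}$; $(\Box_R)$ $G\{\Gamma\Rightarrow\Delta,\langle\,\Rightarrow[\,\Rightarrow A]\rangle\}$ / $G\{\Gamma\Rightarrow\Delta,\Box A\}$; $(\Diamond_L)$ $G\{\Gamma\Rightarrow\Delta,[A\Rightarrow\,]\}$ / $G\{\Gamma,\Diamond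 A\Rightarrow\Delta\}$; $(\Diamond_R)$ $G\{\Gamma\Rightarrow\Delta,\Diamond A,[\Sigma\Rightarrow\Pi,A]\}$ / $G\{\Gamma\Rightarrow\Delta,\Diamond A,[\Sigma\Rightarrow\Pi]\}$; (trans) $G\{\Gamma,\Gamma'\Rightarrow\Delta,\langle\Gamma',\Sigma\Rightarrow\Pi\rangle\}$ / $G\{\Gamma,\Gamma'\Rightarrow\Delta,\langle\Sigma\Rightarrow\Pi\rangle\}$; $(\mathrm{inter}_{fc})$ $G\{\Gamma\Rightarrow\Delta,\langle\Sigma\Rightarrow\Pi,[\Lambda\Rightarrow\Theta^*]\rangle,[\Lambda\Rightarrow\Theta]\}$ / $G\{\Gamma\Rightarrow\Delta,\langle\Sigma\Rightarrow\Pi\rangle,[\Lambda\Rightarrow\Theta]\}$; $(\mathrm{inter}_{bc})$ $G\{\Gamma\Rightarrow\Delta,[\Lambda\Rightarrow\Theta,\langle\Sigma\Rightarrow\Pi\rangle],\langle\,\Rightarrow[\Sigma\Rightarrow\Pi]\rangle\}$ / $G\{\Gamma\Rightarrow\Delta,[\Lambda\Rightarrow\Theta,\langle\Sigma\Rightarrow\Pi\rangle]\}$. A proof of $S$ is a finite tree of sequents built with these rules, with root $S$ and all leaves axioms; a formula $A$ is provable if $\Rightarrow A$ is. *)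

theory Defs
  imports Main "HOL-Library.Multiset"
begin

datatype 'a fm = At 'a | Bot | Top | And "'a fm" "'a fm" | Or "'a fm" "'a fm"
  | Imp "'a fm" "'a fm" | Box "'a fm" | Dia "'a fm"

text \<open>Seq G D I B represents  G \<Rightarrow> D, \<langle>I\<rangle>, [B]  : antecedent G (multiset of formulas),
 consequent formed by the formulas D, the implication blocks (one per element of I)
 and the modal blocks (one per element of B).\<close>

datatype 'a seq = Seq "'a fm multiset" "'a fm multiset" "'a seq multiset" "'a seq multiset"

definition bimodel :: "'w set \<Rightarrow> ('w \<Rightarrow> 'w \<Rightarrow> bool) \<Rightarrow> ('w \<Rightarrow> 'w \<Rightarrow> bool) \<Rightarrow> ('w \<Rightarrow> 'a set) \<Rightarrow> bool" where
  "bimodel W le R V \<longleftrightarrow>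
     W \<noteq> {} \<and>
     (\<forall>x y. le x y \<longrightarrow> x \<in> W \<and> y \<in> W) \<and>
     (\<forall>x y. R x y \<longrightarrow> x \<in> W \<and> y \<in> W) \<and>
     (\<forall>x\<in>W. le x x) \<and>
     (\<forall>x y z. le x y \<longrightarrow> le y z \<longrightarrow> le x z) \<and>
     (\<forall>x y. le x y \<longrightarrow> V x \<subseteq> V y) \<and>
     (\<forall>x x' z. le x x' \<longrightarrow> R x z \<longrightarrow> (\<exists>z'. R x' z' \<and> le z z')) \<and>
     (\<forall>x z z'. R x z \<longrightarrow> le z z' \<longrightarrow> (\<exists>x'. le x x' \<and> R x' z'))"

fun forces :: "('w \<Rightarrow> 'w \<Rightarrow> bool) \<Rightarrow> ('w \<Rightarrow> 'w \<Rightarrow> bool) \<Rightarrow> ('w \<Rightarrow> 'a set) \<Rightarrow> 'w \<Rightarrow> 'a fm \<Rightarrow> bool" where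
  "forces le R V w (At p) = (p \<in> V w)"
| "forces le R V w Bot = False"
| "forces le R V w Top = True"
| "forces le R V w (And A B) = (forces le R V w A \<and> forces le R V w B)"
| "forces le R V w (Or A B) = (forces le R V w A \<or> forces le R V w B)"
| "forces le R V w (Imp A B) = (\<forall>w'. le w w' \<longrightarrow> forces le R V w' A \<longrightarrow> forces le R V w' B)"
| "forces le R V w (Box A) = (\<forall>w' v'. le w w' \<longrightarrow> R w' v' \<longrightarrow> forces le R V v' A)"
| "forces le R V w (Dia A) = (\<exists>v. R w v \<and> forces le R V v A)"

primrec forces_seq :: "('w \<Rightarrow> 'w \<Rightarrow> bool) \<Rightarrow> ('w \<Rightarrow> 'w \<Rightarrow> bool) \<Rightarrow> ('w \<Rightarrow> 'a set) \<Rightarrow> 'a seq \<Rightarrow> 'w \<Rightarrow> bool" where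
  "forces_seq le R V (Seq G D I B) = (\<lambda>x.
     (\<exists>A\<in>#G. \<not> forces le R V x A) \<or>
     (\<exists>A\<in>#D. forces le R V x A) \<or>
     (\<exists>f\<in>#image_mset (forces_seq le R V) I. \<forall>x'. le x x' \<longrightarrow> f x') \<or>
     (\<exists>f\<in>#image_mset (forces_seq le R V) B. \<forall>y. R x y \<longrightarrow> f y))"

datatype 'a ctx = Hole
  | CImp "'a fm multiset" "'a fm multiset" "'a seq multiset" "'a seq multiset" "'a ctx"
  | CBox "'a fm multiset" "'a fm multiset" "'a seq multiset" "'a seq multiset" "'a ctx"

primrec fill :: "'a ctx \<Rightarrow> 'a seq \<Rightarrow> 'a seq" where
  "fill Hole S = S"
| "fill (CImp G D I B C) S = Seq G D (add_mset (fill C S) I) B"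
| "fill (CBox G D I B C) S = Seq G D I (add_mset (fill C S) B)"

text \<open>Local positive part: star_seq (\<Lambda> \<Rightarrow> \<Theta>) = (\<Lambda> \<Rightarrow> \<Theta>*).\<close>

primrec star_seq :: "'a seq \<Rightarrow> 'a seq" where
  "star_seq (Seq L D I B) = Seq L {#} {#} (image_mset star_seq B)"

inductive provable :: "'a seq \<Rightarrow> bool" where
  ax_bot: "provable (fill C (Seq (add_mset Bot G) D I B))"
| ax_top: "provable (fill C (Seq G (add_mset Top D) I B))"
| ax_at: "provable (fill C (Seq (add_mset (At p) G) (add_mset (At p) D) I B))"
| andL: "provable (fill C (Seq (add_mset A (add_mset A' G)) D I B))
    \<Longrightarrow> provable (fill C (Seq (add_mset (And A A') G) D I B))"
| andR: "provable (fill C (Seq G (add_mset A D) I B))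
    \<Longrightarrow> provable (fill C (Seq G (add_mset A' D) I B))
    \<Longrightarrow> provable (fill C (Seq G (add_mset (And A A') D) I B))"
| orL: "provable (fill C (Seq (add_mset A G) D I B))
    \<Longrightarrow> provable (fill C (Seq (add_mset A' G) D I B))
    \<Longrightarrow> provable (fill C (Seq (add_mset (Or A A') G) D I B))"
| orR: "provable (fill C (Seq G (add_mset A (add_mset A' D)) I B))
    \<Longrightarrow> provable (fill C (Seq G (add_mset (Or A A') D) I B))"
| impL: "provable (fill C (Seq (add_mset (Imp A A') G) (add_mset A D) I B))
    \<Longrightarrow> provable (fill C (Seq (add_mset A' G) D I B))
    \<Longrightarrow> provable (fill C (Seq (add_mset (Imp A A') G) D I B))"
| impR: "provable (fill C (Seq G D (add_mset (Seq {#A#} {#A'#} {#} {#}) I) B))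
    \<Longrightarrow> provable (fill C (Seq G (add_mset (Imp A A') D) I B))"
| boxL: "provable (fill C (Seq (add_mset (Box A) G) D I (add_mset (Seq (add_mset A S) P PI PB) B)))
    \<Longrightarrow> provable (fill C (Seq (add_mset (Box A) G) D I (add_mset (Seq S P PI PB) B)))"
| boxR: "provable (fill C (Seq G D (add_mset (Seq {#} {#} {#} {# Seq {#} {#A#} {#} {#} #}) I) B))
    \<Longrightarrow> provable (fill C (Seq G (add_mset (Box A) D) I B))"
| diaL: "provable (fill C (Seq G D I (add_mset (Seq {#A#} {#} {#} {#}) B)))
    \<Longrightarrow> provable (fill C (Seq (add_mset (Dia A) G) D I B))"
| diaR: "provable (fill C (Seq G (add_mset (Dia A) D) I (add_mset (Seq S (add_mset A P) PI PB) B)))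
    \<Longrightarrow> provable (fill C (Seq G (add_mset (Dia A) D) I (add_mset (Seq S P PI PB) B)))"
| trans: "provable (fill C (Seq (G + G') D (add_mset (Seq (G' + S) P PI PB) I) B))
    \<Longrightarrow> provable (fill C (Seq (G + G') D (add_mset (Seq S P PI PB) I) B))"
| inter_fc: "provable (fill C (Seq G D (add_mset (Seq S P PI (add_mset (star_seq T) PB)) I) (add_mset T B)))
    \<Longrightarrow> provable (fill C (Seq G D (add_mset (Seq S P PI PB) I) (add_mset T B)))"
| inter_bc: "provable (fill C (Seq G D (add_mset (Seq {#} {#} {#} {#Seq S P PI PB#}) I)
                                (add_mset (Seq L TD (add_mset (Seq S P PI PB) TI) TB) B)))
    \<Longrightarrow> provable (fill C (Seq G D I (add_mset (Seq L TD (add_mset (Seq S P PI PB) TI) TB) B)))"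

end

theory Submission
  imports Defs
begin

text \<open>Every rule is sound pointwise: at each
  world where the premisses are forced, the conclusion is forced.  Filling a context preserves
  pointwise soundness, because both kinds of blocks are universal modalities and hence commute
  with conjunctions of premisses.  The frame conditions enter only through the structural rules:
  (trans) uses persistence of formulas, (inter_fc) uses (FC) together with the fact that a
  sequent is forced wherever its local positive part is forced at some \<open>\<le>\<close>-later world, and
  (inter_bc) uses (BC).\<close>

locale bi_model =
  fixes W :: "'w set" and le R :: "'w \<Rightarrow> 'w \<Rightarrow> bool" and V :: "'w \<Rightarrow> 'a set"
  assumes bimodel: "bimodel W le R V"
begin

lemma le_in_W: "le x y \<Longrightarrow> x \<in> W \<and> y \<in> W"
  using bimodel unfolding bimodel_def by blast

lemma R_in_W: "R x y \<Longrightarrow> x \<in> W \<and> y \<in> W"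
  using bimodel unfolding bimodel_def by blast

lemma le_refl: "x \<in> W \<Longrightarrow> le x x"
  using bimodel unfolding bimodel_def by blast

lemma le_trans: "le x y \<Longrightarrow> le y z \<Longrightarrow> le x z"
  using bimodel unfolding bimodel_def by blast

lemma V_mono: "le x y \<Longrightarrow> V x \<subseteq> V y"
  using bimodel unfolding bimodel_def by blast

lemma forth_condition: "le x x' \<Longrightarrow> R x z \<Longrightarrow> \<exists>z'. R x' z' \<and> le z z'"
  using bimodel unfolding bimodel_def by blast

lemma back_condition: "R x z \<Longrightarrow> le z z' \<Longrightarrow> \<exists>x'. le x x' \<and> R x' z'"
  using bimodel unfolding bimodel_def by blast

lemma forces_persistent: "le x y \<Longrightarrow> forces le R V x A \<Longrightarrow> forces le R V y A"
proof (induction A arbitrary: x y)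
  case (At p)
  then show ?case using V_mono by auto
next
  case (Imp A B)
  then show ?case using le_trans by auto
next
  case (Box A)
  then show ?case using le_trans by simp blast
next
  case (Dia A)
  then show ?case using forth_condition by fastforce
qed auto

lemma forces_seq_if_star_seq_above:
  "le y z \<Longrightarrow> forces_seq le R V (star_seq T) z \<Longrightarrow> forces_seq le R V T y"
proof (induction T arbitrary: y z)
  case (Seq L D I B)
  show ?case
  proof (cases "\<forall>A\<in>#L. forces le R V y A")
    case False
    then show ?thesis by auto
  next
    case True
    then have "\<forall>A\<in>#L. forces le R V z A"
      using forces_persistent \<open>le y z\<close> by blast
    then obtain T where T: "T \<in># B"
      and T_star: "\<forall>u. R z u \<longrightarrow> forces_seq le R V (star_seq T) u"
      using Seq.prems(2) by auto
    have "forces_seq le R V T u" if "R y u" for u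
    proof -
      obtain u' where "R z u'" "le u u'"
        using forth_condition \<open>le y z\<close> \<open>R y u\<close> by blast
      then show ?thesis using Seq.IH(2)[OF T] T_star by blast
    qed
    then show ?thesis using T by (simp only: forces_seq.simps set_image_mset) blast
  qed
qed

lemma forces_seq_add_imp_block:
  "forces_seq le R V (Seq G D (add_mset T I) B) x \<longleftrightarrow>
     (\<forall>x'. le x x' \<longrightarrow> forces_seq le R V T x') \<or> forces_seq le R V (Seq G D I B) x"
  by auto

lemma forces_seq_add_box_block:
  "forces_seq le R V (Seq G D I (add_mset T B)) x \<longleftrightarrow>
     (\<forall>y. R x y \<longrightarrow> forces_seq le R V T y) \<or> forces_seq le R V (Seq G D I B) x"
  by auto

definition valid :: "'a seq \<Rightarrow> bool" where
  "valid S \<longleftrightarrow> (\<forall>x\<in>W. forces_seq le R V S x)"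

lemma valid_fill: "valid S \<Longrightarrow> valid (fill C S)"
  unfolding valid_def
  by (induction C)
    (auto simp: forces_seq_add_imp_block forces_seq_add_box_block dest: le_in_W R_in_W)

lemma forces_seq_fill_preserves_rule:
  assumes local: "\<And>x. x \<in> W \<Longrightarrow> forces_seq le R V S1 x \<Longrightarrow> forces_seq le R V S2 x \<Longrightarrow>
      forces_seq le R V S x"
  shows "x \<in> W \<Longrightarrow> forces_seq le R V (fill C S1) x \<Longrightarrow> forces_seq le R V (fill C S2) x \<Longrightarrow>
    forces_seq le R V (fill C S) x"
proof (induction C arbitrary: x)
  case Hole
  then show ?case using local by simp
next
  case (CImp G D I B C)
  then show ?case
    unfolding fill.simps forces_seq_add_imp_block by (meson le_in_W)
next
  case (CBox G D I B C)
  then show ?case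
    unfolding fill.simps forces_seq_add_box_block by (meson R_in_W)
qed

lemma valid_fill_rule2:
  assumes "\<And>x. x \<in> W \<Longrightarrow> forces_seq le R V S1 x \<Longrightarrow> forces_seq le R V S2 x \<Longrightarrow>
      forces_seq le R V S x"
    and "valid (fill C S1)" and "valid (fill C S2)"
  shows "valid (fill C S)"
  using forces_seq_fill_preserves_rule[OF assms(1)] assms(2,3) unfolding valid_def by blast

lemma valid_fill_rule1:
  assumes "\<And>x. x \<in> W \<Longrightarrow> forces_seq le R V S1 x \<Longrightarrow> forces_seq le R V S x"
    and "valid (fill C S1)"
  shows "valid (fill C S)"
  using valid_fill_rule2[of S1 S1] assms by blast

lemma trans_rule_sound:
  assumes "forces_seq le R V (Seq (G + G') D (add_mset (Seq (G' + S) P PI PB) I) B) x"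
  shows "forces_seq le R V (Seq (G + G') D (add_mset (Seq S P PI PB) I) B) x"
proof (cases "\<forall>A\<in>#G'. forces le R V x A")
  case True
  have "forces_seq le R V (Seq S P PI PB) x'"
    if "le x x'" and "forces_seq le R V (Seq (G' + S) P PI PB) x'" for x'
  proof -
    have "\<forall>A\<in>#G'. forces le R V x' A"
      using True forces_persistent \<open>le x x'\<close> by blast
    then show ?thesis using that(2) by auto
  qed
  then show ?thesis
    using assms unfolding forces_seq_add_imp_block by blast
qed auto

lemma box_block_if_star_seq_box_block_above:
  assumes "le x x'" and "\<forall>z. R x' z \<longrightarrow> forces_seq le R V (star_seq T) z"
  shows "\<forall>y. R x y \<longrightarrow> forces_seq le R V T y"
proof (intro allI impI)
  fix y assume "R x y"
  then obtain z where "R x' z" "le y z"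
    using forth_condition assms(1) by blast
  then show "forces_seq le R V T y"
    using assms(2) forces_seq_if_star_seq_above by blast
qed

lemma inter_fc_rule_sound:
  assumes "forces_seq le R V
    (Seq G D (add_mset (Seq S P PI (add_mset (star_seq T) PB)) I) (add_mset T B)) x"
  shows "forces_seq le R V (Seq G D (add_mset (Seq S P PI PB) I) (add_mset T B)) x"
proof (cases "\<forall>y. R x y \<longrightarrow> forces_seq le R V T y")
  case False
  then have "\<forall>x'. le x x' \<longrightarrow> \<not> (\<forall>z. R x' z \<longrightarrow> forces_seq le R V (star_seq T) z)"
    using box_block_if_star_seq_box_block_above by blast
  then show ?thesis
    using assms unfolding forces_seq_add_imp_block forces_seq_add_box_block by blast
qed simp

lemma inter_bc_rule_sound:
  assumes "forces_seq le R V
    (Seq G D (add_mset (Seq {#} {#} {#} {#T#}) I) (add_mset (Seq L TD (add_mset T TI) TB) B)) x"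
  shows "forces_seq le R V (Seq G D I (add_mset (Seq L TD (add_mset T TI) TB) B)) x"
proof (cases "\<forall>x'. le x x' \<longrightarrow> (\<forall>z. R x' z \<longrightarrow> forces_seq le R V T z)")
  case True
  then have "\<forall>y. R x y \<longrightarrow> (\<forall>y'. le y y' \<longrightarrow> forces_seq le R V T y')"
    using back_condition by blast
  then show ?thesis by simp
next
  case False
  have "forces_seq le R V (Seq {#} {#} {#} {#T#}) x' \<longleftrightarrow>
      (\<forall>z. R x' z \<longrightarrow> forces_seq le R V T z)" for x'
    by simp
  then show ?thesis
    using assms False unfolding forces_seq_add_imp_block by blast
qed

lemma soundness: "provable S \<Longrightarrow> valid S"
proof (induction S rule: provable.induct)
  case (ax_bot C G D I B)
  show ?case by (intro valid_fill) (simp add: valid_def)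
next
  case (ax_top C G D I B)
  show ?case by (intro valid_fill) (simp add: valid_def)
next
  case (ax_at C p G D I B)
  show ?case by (intro valid_fill) (simp add: valid_def)
next
  case (andL C A A' G D I B)
  show ?case by (rule valid_fill_rule1[OF _ andL.IH]) auto
next
  case (andR C G A D I B A')
  show ?case by (rule valid_fill_rule2[OF _ andR.IH]) auto
next
  case (orL C A G D I B A')
  show ?case by (rule valid_fill_rule2[OF _ orL.IH]) auto
next
  case (orR C G A A' D I B)
  show ?case by (rule valid_fill_rule1[OF _ orR.IH]) auto
next
  case (impL C A A' G D I B)
  show ?case by (rule valid_fill_rule2[OF _ impL.IH]) (auto dest: le_refl)
next
  case (impR C G D A A' I B)
  show ?case by (rule valid_fill_rule1[OF _ impR.IH]) auto
next
  case (boxL C A G D S P PI PB I B)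
  show ?case by (rule valid_fill_rule1[OF _ boxL.IH]) (simp, blast dest: le_refl)
next
  case (boxR C G D A I B)
  show ?case by (rule valid_fill_rule1[OF _ boxR.IH]) auto
next
  case (diaL C G D I A B)
  show ?case by (rule valid_fill_rule1[OF _ diaL.IH]) auto
next
  case (diaR C G A D I S P PI PB B)
  show ?case by (rule valid_fill_rule1[OF _ diaR.IH]) auto
next
  case (trans C G G' D S P PI PB I B)
  show ?case by (rule valid_fill_rule1[OF _ trans.IH]) (rule trans_rule_sound)
next
  case (inter_fc C G D S P PI T PB I B)
  show ?case by (rule valid_fill_rule1[OF _ inter_fc.IH]) (rule inter_fc_rule_sound)
next
  case (inter_bc C G D S P PI PB I L TD TI TB B)
  show ?case by (rule valid_fill_rule1[OF _ inter_bc.IH]) (rule inter_bc_rule_sound)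
qed

end

theorem theorem3p1:
  fixes S :: "'a seq" and W :: "'w set" and le R :: "'w \<Rightarrow> 'w \<Rightarrow> bool" and V :: "'w \<Rightarrow> 'a set"
  assumes "provable S" and "bimodel W le R V" and "w \<in> W"
  shows "forces_seq le R V S w"
proof -
  interpret bi_model W le R V
    using assms(2) by unfold_locales
  show ?thesis
    using soundness[OF assms(1)] assms(3) unfolding valid_def by blast
qed

end
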